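(* Let $\mathbf{Y}\in\mathbb{R}^{d_1\times d_2}$, let $R\ge r$ be positive integers, and let $\mathbf{X}=\Pi_r(\mathbf{Y})$ with SVD $\mathbf{X}=\mathbf{U}\boldsymbol\Sigma\mathbf{V}^T$. Suppose there exist $\overline{\mathbf{U}}\in\mathbb{R}^{d_1\times R}$ and $\overline{\mathbf{V}}\in\mathbb{R}^{d_2\times R}$ such that $\mathrm{col}(\mathbf{U})\subseteq\mathrm{col}(\overline{\mathbf{U}})$, $\mathrm{col}(\mathbf{V})\subseteq\mathrm{col}(\overline{\mathbf{V}})$, and let $\mathcal{A}=\{\mathbf{A}\in\mathbb{R}^{d_1\times d_2}:\mathrm{col}(\mathbf{A}^T)\subseteq\mathrm{col}(\overline{\mathbf{V}}),\ \mathrm{col}(\mathbf{A})\subseteq\mathrm{col}(\overline{\mathbf{U}})\}$, a linear subspace. Let $\hat{\mathbf{X}}=\Pi_{\mathcal{A}}(\mathbf{Y})$. Then $\mathbf{X}=\Pi_r(\hat{\mathbf{X}})$.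
   Context: $\Pi_r(\mathbf{M})$ denotes a best rank-$\le r$ approximation of a matrix $\mathbf{M}$ in Frobenius norm (rank-$r$ truncated SVD); $\Pi_{\mathcal{A}}$ is the orthogonal (Frobenius) projection onto the subspace $\mathcal{A}$; $\mathrm{col}(\cdot)$ denotes column space. *)

theory Defs
  imports "HOL-Analysis.Analysis"
begin

(* Frobenius norm of a real matrix (d1 x d2 matrices are real^'d2^'d1) *)
definition frob_norm :: "real^'n^'m \<Rightarrow> real" where
  "frob_norm A = sqrt (\<Sum>i\<in>UNIV. \<Sum>j\<in>UNIV. (A $ i $ j)^2)"

definition col_space :: "real^'n^'m \<Rightarrow> (real^'m) set" where
  "col_space A = span (columns A)"

(* Pi_r(M): X is a best rank-<=r approximation of M in Frobenius norm *)
definition best_rank_approx :: "nat \<Rightarrow> real^'n^'m \<Rightarrow> real^'n^'m \<Rightarrow> bool" where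
  "best_rank_approx r M X \<longleftrightarrow> rank X \<le> r \<and>
     (\<forall>Z::real^'n^'m. rank Z \<le> r \<longrightarrow> frob_norm (M - X) \<le> frob_norm (M - Z))"

(* Pi_S(M): P is the orthogonal (Frobenius) projection of M onto the set S *)
definition is_frob_proj :: "(real^'n^'m) set \<Rightarrow> real^'n^'m \<Rightarrow> real^'n^'m \<Rightarrow> bool" where
  "is_frob_proj S M P \<longleftrightarrow> P \<in> S \<and> (\<forall>B\<in>S. frob_norm (M - P) \<le> frob_norm (M - B))"

(* an SVD X = U Sigma V^T with r = CARD('r) components *)
definition is_svd :: "real^'n^'m \<Rightarrow> real^'r^'m \<Rightarrow> real^'r^'r \<Rightarrow> real^'r^'n \<Rightarrow> bool" where
  "is_svd X U S V \<longleftrightarrow> transpose U ** U = mat 1 \<and> transpose V ** V = mat 1 \<and>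
     (\<forall>i j. i \<noteq> j \<longrightarrow> S $ i $ j = 0) \<and> (\<forall>i. S $ i $ i \<ge> 0) \<and>
     X = U ** S ** transpose V"

end

theory Submission
  imports Defs
begin

text \<open>Let \<open>P\<close>, \<open>Q\<close> be the orthogonal projections onto \<open>col(Ubar)\<close> and \<open>col(Vbar)\<close>;
  then \<open>M \<mapsto> P M Q\<^sup>T\<close> maps every matrix into \<open>\<A>\<close>, fixes \<open>\<A>\<close>, does not increase
  rank and does not increase the Frobenius norm. Since \<open>Xhat\<close> is the orthogonal projection
  of \<open>Y\<close> onto \<open>\<A>\<close>, Pythagoras gives \<open>\<parallel>Y - C\<parallel>\<^sup>2 = \<parallel>Y - Xhat\<parallel>\<^sup>2 + \<parallel>Xhat - C\<parallel>\<^sup>2\<close>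
  for all \<open>C \<in> \<A>\<close>, and \<open>X \<in> \<A>\<close> by the column space hypotheses. Given \<open>Z\<close> of rank
  at most \<open>r\<close>, the matrix \<open>Z' = P Z Q\<^sup>T \<in> \<A>\<close> competes with \<open>X\<close> as an approximation
  of \<open>Y\<close>, so \<open>\<parallel>Xhat - X\<parallel> \<le> \<parallel>Xhat - Z'\<parallel> = \<parallel>P (Xhat - Z) Q\<^sup>T\<parallel> \<le> \<parallel>Xhat - Z\<parallel>\<close>.\<close>

lemma frob_norm_eq_norm: "frob_norm (A::real^'n^'m) = norm A"
proof -
  have "(norm (A $ i))\<^sup>2 = (\<Sum>j\<in>UNIV. (A $ i $ j)\<^sup>2)" for i
    unfolding norm_vec_def L2_set_def by (simp add: sum_nonneg)
  then show ?thesis unfolding frob_norm_def norm_vec_def[of A] L2_set_def by simp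
qed

lemma norm_transpose: "norm (transpose (A::real^'n^'m)) = norm A"
  unfolding frob_norm_eq_norm[symmetric] frob_norm_def transpose_def
  by (simp add: sum.swap[of _ "UNIV::'n set"])

lemma row_eq_nth: "row i A = A $ i"
  by (simp add: row_def vec_eq_iff)

lemma column_matrix_mult: "column j (A ** B) = A *v column j B"
  by (simp add: vec_eq_iff matrix_matrix_mult_def matrix_vector_mult_def column_def)

lemma nth_matrix_mult_transpose: "(M ** transpose Q) $ i = Q *v (M $ i)"
  for M :: "'a::comm_semiring_1^'n^'m"
  by (simp add: vec_eq_iff matrix_matrix_mult_def matrix_vector_mult_def transpose_def mult.commute)

lemma matrix_diff_ldistrib: "A ** (B - C) = A ** B - A ** C"
  for A :: "'a::ring_1^'n^'m"
  by (simp add: vec_eq_iff matrix_matrix_mult_def algebra_simps sum_subtractf)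

lemma matrix_diff_rdistrib: "(B - C) ** A = B ** A - C ** A"
  for B :: "'a::ring_1^'n^'m"
  by (simp add: vec_eq_iff matrix_matrix_mult_def algebra_simps sum_subtractf)

lemma col_space_subset_iff:
  assumes "subspace W"
  shows "col_space M \<subseteq> W \<longleftrightarrow> (\<forall>j. column j M \<in> W)"
proof
  assume "col_space M \<subseteq> W"
  then show "\<forall>j. column j M \<in> W"
    unfolding col_space_def columns_def by (auto dest: subsetD intro: span_base)
next
  assume "\<forall>j. column j M \<in> W"
  then have "columns M \<subseteq> W" unfolding columns_def by auto
  then show "col_space M \<subseteq> W" unfolding col_space_def using assms by (rule span_minimal)
qed

lemma col_space_matrix_mult_subset: "col_space (A ** B) \<subseteq> col_space A"
  using col_space_subset_iff[OF subspace_span, of "A ** B" "columns A"]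
  by (simp add: col_space_def column_matrix_mult matrix_vector_mult_in_columnspace)

lemma orthogonal_projection_matrix_exists:
  fixes W :: "(real^'n) set"
  assumes "subspace W"
  obtains P :: "real^'n^'n"
  where "\<And>x. P *v x \<in> W" "\<And>x. x \<in> W \<Longrightarrow> P *v x = x" "\<And>x. norm (P *v x) \<le> norm x"
proof -
  obtain T where T: "pairwise orthogonal T" "span T = W"
    using orthogonal_basis_subspace[OF assms] by blast
  define p where "p = (\<lambda>x::real^'n. \<Sum>b\<in>T. (b \<bullet> x / (b \<bullet> b)) *\<^sub>R b)"
  have "linear p"
    unfolding p_def
    by (auto simp: linear_iff inner_add_right add_divide_distrib scaleR_add_left sum.distrib
        scaleR_sum_right)
  then have Pv: "matrix p *v x = p x" for x
    by simp
  have p_in: "p x \<in> W" for x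
    unfolding p_def T(2)[symmetric] by (intro span_sum span_scale span_base)
  have orth: "orthogonal y (x - p x)" if "y \<in> W" for x y
    unfolding p_def using Gram_Schmidt_step[OF T(1), of y x] T(2) that by simp
  show thesis
  proof
    show "matrix p *v x \<in> W" for x using Pv p_in by simp
    show "matrix p *v x = x" if "x \<in> W" for x
    proof -
      have "x - p x \<in> W" using that p_in assms by (simp add: subspace_diff)
      then have "orthogonal (x - p x) (x - p x)" using orth by blast
      then show ?thesis using Pv by (simp add: orthogonal_def)
    qed
    show "norm (matrix p *v x) \<le> norm x" for x
    proof -
      have "(norm (p x + (x - p x)))\<^sup>2 = (norm (p x))\<^sup>2 + (norm (x - p x))\<^sup>2"
        by (rule norm_add_Pythagorean) (use orth p_in in blast)
      then have "(norm (p x))\<^sup>2 \<le> (norm x)\<^sup>2" by simp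
      then show ?thesis using Pv by (simp add: power2_le_iff_abs_le)
    qed
  qed
qed

lemma norm_matrix_mult_contraction_le:
  fixes P :: "real^'m^'m" and Q :: "real^'n^'n" and M :: "real^'n^'m"
  assumes P: "\<And>x. norm (P *v x) \<le> norm x" and Q: "\<And>x. norm (Q *v x) \<le> norm x"
  shows "norm (P ** M ** transpose Q) \<le> norm M"
proof -
  have right: "norm (N ** transpose R) \<le> norm N"
    if "\<And>x. norm (R *v x) \<le> norm x" for N :: "real^'k^'l" and R
    by (rule norm_le_componentwise_cart) (simp add: nth_matrix_mult_transpose that)
  have "norm (P ** M ** transpose Q) \<le> norm (P ** M)"
    using right[OF Q] .
  also have "\<dots> = norm (transpose M ** transpose P)"
    by (metis matrix_transpose_mul norm_transpose)
  also have "\<dots> \<le> norm M"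
    using right[OF P, of "transpose M"] by (simp add: norm_transpose)
  finally show ?thesis .
qed

lemma nearest_point_subspace_Pythagorean:
  fixes A :: "'a::euclidean_space set"
  assumes "subspace A" and "p \<in> A" and nearest: "\<And>b. b \<in> A \<Longrightarrow> norm (y - p) \<le> norm (y - b)"
    and "c \<in> A"
  shows "(norm (y - c))\<^sup>2 = (norm (y - p))\<^sup>2 + (norm (p - c))\<^sup>2"
proof -
  have span_A: "span A = A" using assms(1) by (simp add: span_eq_iff)
  obtain u z where u: "u \<in> A" and z: "\<And>w. w \<in> A \<Longrightarrow> orthogonal z w" and y: "y = u + z"
    using orthogonal_subspace_decomp_exists[of A y] span_A by metis
  have pyth: "(norm (y - b))\<^sup>2 = (norm z)\<^sup>2 + (norm (u - b))\<^sup>2" if "b \<in> A" for b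
  proof -
    have "orthogonal z (u - b)" using z u that assms(1) by (simp add: subspace_diff)
    then have "(norm (z + (u - b)))\<^sup>2 = (norm z)\<^sup>2 + (norm (u - b))\<^sup>2"
      by (rule norm_add_Pythagorean)
    then show ?thesis by (simp add: y algebra_simps)
  qed
  have "norm (y - p) \<le> norm z" using nearest[OF u] by (simp add: y)
  then have "(norm (y - p))\<^sup>2 \<le> (norm z)\<^sup>2" by (simp add: power_mono)
  then have "(norm (u - p))\<^sup>2 \<le> 0" using pyth[OF \<open>p \<in> A\<close>] by (simp add: power_mono)
  then have "p = u" by simp
  then show ?thesis using pyth[OF \<open>c \<in> A\<close>] pyth[OF \<open>p \<in> A\<close>] by simp
qed

definition col_row_constrained :: "(real^'m) set \<Rightarrow> (real^'n) set \<Rightarrow> (real^'n^'m) set" where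
  "col_row_constrained WU WV = {A. col_space A \<subseteq> WU \<and> col_space (transpose A) \<subseteq> WV}"

lemma mem_col_row_constrained_iff:
  assumes "subspace WU" and "subspace WV"
  shows "A \<in> col_row_constrained WU WV \<longleftrightarrow> (\<forall>j. column j A \<in> WU) \<and> (\<forall>i. A $ i \<in> WV)"
  using col_space_subset_iff[OF assms(1), of A] col_space_subset_iff[OF assms(2), of "transpose A"]
  by (simp add: col_row_constrained_def row_eq_nth)

lemma subspace_col_row_constrained:
  fixes WU :: "(real^'m) set" and WV :: "(real^'n) set"
  assumes "subspace WU" and "subspace WV"
  shows "subspace (col_row_constrained WU WV)"
proof -
  have "column j (B + C) = column j B + column j C" "column j (c *\<^sub>R B) = c *\<^sub>R column j B"
    "column j (0::real^'n^'m) = 0" for B C :: "real^'n^'m" and c j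
    by (simp_all add: column_def vec_eq_iff)
  then show ?thesis
    using assms unfolding subspace_def
    by (auto simp: mem_col_row_constrained_iff[OF assms] subspace_0 subspace_add subspace_scale)
qed

lemma two_sided_projection_mem:
  assumes "subspace WU" and "subspace WV"
    and "\<And>x. P *v x \<in> WU" and "\<And>x. Q *v x \<in> WV"
  shows "P ** M ** transpose Q \<in> col_row_constrained WU WV"
  unfolding mem_col_row_constrained_iff[OF assms(1,2)]
proof (intro conjI allI)
  show "column j (P ** M ** transpose Q) \<in> WU" for j
    by (simp add: column_matrix_mult assms(3) flip: matrix_mul_assoc)
  show "(P ** M ** transpose Q) $ i \<in> WV" for i
    by (simp add: nth_matrix_mult_transpose assms(4))
qed

lemma two_sided_projection_fixes:
  assumes "subspace WU" and "subspace WV"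
    and "\<And>x. x \<in> WU \<Longrightarrow> P *v x = x" and "\<And>x. x \<in> WV \<Longrightarrow> Q *v x = x"
    and "M \<in> col_row_constrained WU WV"
  shows "P ** M ** transpose Q = M"
proof -
  have cols: "\<forall>j. column j M \<in> WU" and rows: "\<forall>i. M $ i \<in> WV"
    using assms(5) mem_col_row_constrained_iff[OF assms(1,2)] by auto
  have "column j (P ** M) = column j M" for j
    using cols assms(3) by (simp add: column_matrix_mult)
  then have "P ** M = M"
    by (simp add: vec_eq_iff column_def)
  moreover have "M ** transpose Q = M"
    using rows assms(4) by (simp add: vec_eq_iff[of "M ** transpose Q"] nth_matrix_mult_transpose)
  ultimately show ?thesis by simp
qed

lemma svd_mem_col_row_constrained:
  assumes "is_svd X U S V"
  shows "X \<in> col_row_constrained (col_space U) (col_space V)"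
proof -
  have X: "X = U ** (S ** transpose V)"
    using assms by (simp add: is_svd_def matrix_mul_assoc)
  then have "transpose X = V ** (transpose S ** transpose U)"
    by (simp add: matrix_transpose_mul matrix_mul_assoc)
  with X show ?thesis
    unfolding col_row_constrained_def by (simp add: col_space_matrix_mult_subset)
qed

lemma best_rank_approx_of_projection:
  fixes WU :: "(real^'m) set" and WV :: "(real^'n) set"
  assumes "subspace WU" and "subspace WV"
    and best: "best_rank_approx r Y X" and X: "X \<in> col_row_constrained WU WV"
    and proj: "is_frob_proj (col_row_constrained WU WV) Y Xhat"
  shows "best_rank_approx r Xhat X"
proof -
  let ?\<A> = "col_row_constrained WU WV"
  obtain P where P: "\<And>x. P *v x \<in> WU" "\<And>x. x \<in> WU \<Longrightarrow> P *v x = x" "\<And>x. norm (P *v x) \<le> norm x"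
    using orthogonal_projection_matrix_exists[OF assms(1)] by blast
  obtain Q where Q: "\<And>x. Q *v x \<in> WV" "\<And>x. x \<in> WV \<Longrightarrow> Q *v x = x" "\<And>x. norm (Q *v x) \<le> norm x"
    using orthogonal_projection_matrix_exists[OF assms(2)] by blast
  have Xhat: "Xhat \<in> ?\<A>" and nearest: "\<And>B. B \<in> ?\<A> \<Longrightarrow> norm (Y - Xhat) \<le> norm (Y - B)"
    using proj by (auto simp: is_frob_proj_def frob_norm_eq_norm)
  have pyth: "(norm (Y - C))\<^sup>2 = (norm (Y - Xhat))\<^sup>2 + (norm (Xhat - C))\<^sup>2" if "C \<in> ?\<A>" for C
    using nearest_point_subspace_Pythagorean[OF subspace_col_row_constrained[OF assms(1,2)]
        Xhat nearest that] by blast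
  have "norm (Xhat - X) \<le> norm (Xhat - Z)" if "rank Z \<le> r" for Z
  proof -
    define Z' where "Z' = P ** Z ** transpose Q"
    have Z': "Z' \<in> ?\<A>"
      unfolding Z'_def using two_sided_projection_mem[OF assms(1,2) P(1) Q(1)] .
    have "rank Z' \<le> r"
      unfolding Z'_def using that by (meson order_trans rank_mul_le_left rank_mul_le_right)
    then have "norm (Y - X) \<le> norm (Y - Z')"
      using best by (simp add: best_rank_approx_def frob_norm_eq_norm)
    then have "(norm (Y - X))\<^sup>2 \<le> (norm (Y - Z'))\<^sup>2"
      by (simp add: power_mono)
    then have "(norm (Xhat - X))\<^sup>2 \<le> (norm (Xhat - Z'))\<^sup>2"
      using pyth[OF X] pyth[OF Z'] by linarith
    then have "norm (Xhat - X) \<le> norm (Xhat - Z')"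
      by (simp add: power2_le_iff_abs_le)
    also have "Xhat - Z' = P ** (Xhat - Z) ** transpose Q"
      using two_sided_projection_fixes[OF assms(1,2) P(2) Q(2) Xhat]
      by (simp add: Z'_def matrix_diff_ldistrib matrix_diff_rdistrib)
    also have "norm \<dots> \<le> norm (Xhat - Z)"
      using norm_matrix_mult_contraction_le[OF P(3) Q(3)] .
    finally show ?thesis .
  qed
  then show ?thesis
    using best by (simp add: best_rank_approx_def frob_norm_eq_norm)
qed

theorem mainTheorem7:
  fixes Y X :: "real^'d2^'d1"
    and U :: "real^'r^'d1" and S :: "real^'r^'r" and V :: "real^'r^'d2"
    and Ubar :: "real^'R^'d1" and Vbar :: "real^'R^'d2"
    and Xhat :: "real^'d2^'d1"
    and \<A> :: "(real^'d2^'d1) set"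
  assumes "CARD('r) \<le> CARD('R)"
    and "best_rank_approx CARD('r) Y X"
    and "is_svd X U S V"
    and "col_space U \<subseteq> col_space Ubar"
    and "col_space V \<subseteq> col_space Vbar"
    and "\<A> = {A. col_space (transpose A) \<subseteq> col_space Vbar \<and> col_space A \<subseteq> col_space Ubar}"
    and "is_frob_proj \<A> Y Xhat"
  shows "best_rank_approx CARD('r) Xhat X"
proof -
  have \<A>: "\<A> = col_row_constrained (col_space Ubar) (col_space Vbar)"
    using assms(6) by (auto simp: col_row_constrained_def)
  have "X \<in> \<A>"
    using svd_mem_col_row_constrained[OF assms(3)] assms(4,5)
    by (auto simp: \<A> col_row_constrained_def)
  then show ?thesis
    using best_rank_approx_of_projection[OF subspace_span subspace_span assms(2)] assms(7)
    by (simp add: \<A> col_space_def)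
qed

end
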